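(* Let $L>0$ and let $\gamma\in C^\infty([0,L],\mathbb{R}^2)$ be an arclength-parameterized plane curve with $\gamma(0)=0$, and with signed curvature $\kappa$ satisfying $\kappa(s)\kappa_s(s)>0$ for all $s\in(0,L)$. Then $\gamma(s)\neq0$ for all $s\in(0,L)$, so that a polar tangential angle function $\omega:(0,L)\to\mathbb{R}$ is defined, and $\kappa(s)\omega_s(s)>0$ for all $s\in(0,L)$; in particular $\omega$ is strictly monotone.
   Context: $T=\gamma_s$, $N=R_{\pi/2}T$ with $R_\theta$ the counterclockwise rotation by angle $\theta$, and $\gamma_{ss}=\kappa N$. For a curve with $\gamma(s)\neq0$ for $s\in(0,L)$, set $X:=\gamma/|\gamma|$; a polar tangential angle function is a smooth $\omega:(0,L)\to\mathbb{R}$ with $R_{\omega(s)}X(s)=T(s)$ for all $s\in(0,L)$. *)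

theory Defs
  imports "HOL-Analysis.Analysis"
begin

text \<open>The plane R^2 is identified with the complex numbers; the counterclockwise
rotation by angle theta is multiplication by cis theta.\<close>

definition rot :: "real \<Rightarrow> complex \<Rightarrow> complex" where
  "rot \<theta> v = cis \<theta> * v"

definition smooth_on :: "real set \<Rightarrow> (real \<Rightarrow> 'a::real_normed_vector) \<Rightarrow> bool" where
  "smooth_on S f \<longleftrightarrow> (\<exists>D. (\<forall>x\<in>S. D 0 x = f x) \<and>
      (\<forall>n. \<forall>x\<in>S. (D n has_vector_derivative D (Suc n) x) (at x within S)))"

definition tangent :: "real \<Rightarrow> (real \<Rightarrow> complex) \<Rightarrow> real \<Rightarrow> complex" where
  "tangent L \<gamma> s = vector_derivative \<gamma> (at s within {0..L})"

text \<open>Signed curvature: gamma_ss = kappa N with N = R_{pi/2} T = i T; for |T| = 1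
this means kappa = Im (conj T * gamma_ss).\<close>
definition curvature :: "real \<Rightarrow> (real \<Rightarrow> complex) \<Rightarrow> real \<Rightarrow> real" where
  "curvature L \<gamma> s = Im (cnj (tangent L \<gamma> s) * vector_derivative (tangent L \<gamma>) (at s within {0..L}))"

definition arclength_param :: "real \<Rightarrow> (real \<Rightarrow> complex) \<Rightarrow> bool" where
  "arclength_param L \<gamma> \<longleftrightarrow> (\<forall>s\<in>{0..L}. norm (tangent L \<gamma> s) = 1)"

definition polar_tangential_angle :: "real \<Rightarrow> (real \<Rightarrow> complex) \<Rightarrow> (real \<Rightarrow> real) \<Rightarrow> bool" where
  "polar_tangential_angle L \<gamma> \<omega> \<longleftrightarrow> smooth_on {0<..<L} \<omega> \<and>
     (\<forall>s\<in>{0<..<L}. rot (\<omega> s) (\<gamma> s / complex_of_real (norm (\<gamma> s))) = tangent L \<gamma> s)"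

end

theory Submission
  imports Defs
begin

(*
  Put W = T conj(gamma). Then |W| = |gamma|, and R_omega X = T says exactly that
  cis omega = W / |W|: a polar tangential angle is a smooth argument of W. The Frenet
  equation T_s = i kappa T gives W_s = i kappa W + 1, hence
    omega_s = kappa + Im (conj W) / |W|^2 = kappa - (gamma x T) / |gamma|^2,
  where gamma x T = Im (conj gamma T),
  and Q = kappa |gamma|^2 - 2 (gamma x T) satisfies Q_s = kappa_s |gamma|^2, Q(0) = 0.
  As kappa kappa_s > 0, kappa has no zero and so a constant sign on (0,L); therefore
  kappa(s) Q is increasing on [0,s], strictly since gamma does not vanish identically near 0.
  Thus kappa(s) Q(s) > 0, which excludes gamma(s) = 0, and
    2 kappa omega_s |gamma|^2 = kappa^2 |gamma|^2 + kappa Q > 0.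
  A smooth argument of W exists because the right-hand side for omega_s is smooth (it lies in
  the algebra generated by the derivatives of gamma and 1/|gamma|^2, which is closed under
  differentiation): integrate it and fix the constant of integration.
*)

lemma smooth_on_cong:
  assumes "smooth_on S f" and "\<And>x. x \<in> S \<Longrightarrow> f x = g x"
  shows "smooth_on S g"
  using assms unfolding smooth_on_def by metis

lemma smooth_on_if_derivative_smooth:
  assumes "\<And>x. x \<in> S \<Longrightarrow> (f has_vector_derivative g x) (at x within S)"
    and "smooth_on S g"
  shows "smooth_on S f"
proof -
  obtain D where D0: "\<forall>x\<in>S. D 0 x = g x"
    and D: "\<forall>n. \<forall>x\<in>S. (D n has_vector_derivative D (Suc n) x) (at x within S)"
    using assms(2) unfolding smooth_on_def by blast
  define E where "E n = (case n of 0 \<Rightarrow> f | Suc m \<Rightarrow> D m)" for n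
  have "(E n has_vector_derivative E (Suc n) x) (at x within S)" if "x \<in> S" for n x
    using that assms(1) D0 D by (cases n) (auto simp: E_def)
  then show ?thesis
    unfolding smooth_on_def by (intro exI[of _ E]) (simp add: E_def)
qed

lemma smooth_on_if_derivative_closed:
  assumes closed: "\<And>f. f \<in> F \<Longrightarrow> \<exists>g\<in>F. \<forall>x\<in>S. (f has_vector_derivative g x) (at x within S)"
    and "f \<in> F"
  shows "smooth_on S f"
proof -
  define der where
    "der h = (SOME g. g \<in> F \<and> (\<forall>x\<in>S. (h has_vector_derivative g x) (at x within S)))" for h
  have der: "der h \<in> F \<and> (\<forall>x\<in>S. (h has_vector_derivative der h x) (at x within S))"
    if "h \<in> F" for h
    unfolding der_def using someI_ex[OF closed[OF that, unfolded Bex_def]] by blast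
  have "(der ^^ n) f \<in> F" for n
    by (induction n) (auto simp: \<open>f \<in> F\<close> der)
  then show ?thesis
    unfolding smooth_on_def using der by (intro exI[of _ "\<lambda>n. (der ^^ n) f"]) auto
qed

inductive_set generated_algebra :: "(real \<Rightarrow> real) set \<Rightarrow> (real \<Rightarrow> real) set" for G
where
  generator: "g \<in> G \<Longrightarrow> g \<in> generated_algebra G"
| const: "(\<lambda>x. c) \<in> generated_algebra G"
| add: "f \<in> generated_algebra G \<Longrightarrow> g \<in> generated_algebra G \<Longrightarrow> (\<lambda>x. f x + g x) \<in> generated_algebra G"
| diff: "f \<in> generated_algebra G \<Longrightarrow> g \<in> generated_algebra G \<Longrightarrow> (\<lambda>x. f x - g x) \<in> generated_algebra G"
| mult: "f \<in> generated_algebra G \<Longrightarrow> g \<in> generated_algebra G \<Longrightarrow> (\<lambda>x. f x * g x) \<in> generated_algebra G"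

lemma generated_algebra_derivative:
  assumes gen: "\<And>g. g \<in> G \<Longrightarrow>
      \<exists>g'\<in>generated_algebra G. \<forall>x\<in>S. (g has_real_derivative g' x) (at x within S)"
    and "f \<in> generated_algebra G"
  shows "\<exists>f'\<in>generated_algebra G. \<forall>x\<in>S. (f has_real_derivative f' x) (at x within S)"
  using \<open>f \<in> generated_algebra G\<close>
proof induction
  case (generator g)
  then show ?case by (rule gen)
next
  case (const c)
  show ?case by (intro bexI[of _ "\<lambda>x. 0"] generated_algebra.const) auto
next
  case (add f g)
  then obtain f' g' where "f' \<in> generated_algebra G" "g' \<in> generated_algebra G"
    "\<forall>x\<in>S. (f has_real_derivative f' x) (at x within S)"
    "\<forall>x\<in>S. (g has_real_derivative g' x) (at x within S)" by blast
  then show ?case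
    by (intro bexI[of _ "\<lambda>x. f' x + g' x"] generated_algebra.add) (auto intro: derivative_intros)
next
  case (diff f g)
  then obtain f' g' where "f' \<in> generated_algebra G" "g' \<in> generated_algebra G"
    "\<forall>x\<in>S. (f has_real_derivative f' x) (at x within S)"
    "\<forall>x\<in>S. (g has_real_derivative g' x) (at x within S)" by blast
  then show ?case
    by (intro bexI[of _ "\<lambda>x. f' x - g' x"] generated_algebra.diff) (auto intro: derivative_intros)
next
  case (mult f g)
  then obtain f' g' where "f' \<in> generated_algebra G" "g' \<in> generated_algebra G"
    "\<forall>x\<in>S. (f has_real_derivative f' x) (at x within S)"
    "\<forall>x\<in>S. (g has_real_derivative g' x) (at x within S)" by blast
  then show ?case
    by (intro bexI[of _ "\<lambda>x. f x * g' x + f' x * g x"] generated_algebra.add generated_algebra.mult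
        mult.hyps) (auto intro!: derivative_eq_intros)
qed

lemma smooth_on_generated_algebra:
  assumes "\<And>g. g \<in> G \<Longrightarrow>
      \<exists>g'\<in>generated_algebra G. \<forall>x\<in>S. (g has_real_derivative g' x) (at x within S)"
    and "f \<in> generated_algebra G"
  shows "smooth_on S f"
  using generated_algebra_derivative[OF assms(1)] assms(2)
  by (intro smooth_on_if_derivative_closed[of "generated_algebra G"])
     (simp_all add: has_real_derivative_iff_has_vector_derivative)

lemma has_field_derivative_cmod:
  fixes v :: "real \<Rightarrow> complex"
  assumes "(v has_vector_derivative v') (at x within S)" and "v x \<noteq> 0"
  shows "((\<lambda>x. cmod (v x)) has_field_derivative Re (cnj (v x) * v') / cmod (v x)) (at x within S)"
proof -
  have "((\<lambda>x. cmod (v x)) has_derivative (*) (v' \<bullet> sgn (v x))) (at x within S)"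
    using has_derivative_compose[OF assms(1)[unfolded has_vector_derivative_def]
        has_derivative_norm[OF assms(2)]] by (simp add: mult_commute_abs)
  moreover have "v' \<bullet> sgn (v x) = Re (cnj (v x) * v') / cmod (v x)"
    by (simp add: sgn_div_norm inner_complex_def divide_inverse algebra_simps)
  ultimately show ?thesis
    by (simp only: has_field_derivative_def)
qed

lemma mult_normalized_eq_iff:
  fixes c g w :: complex
  assumes "g \<noteq> 0"
  shows "c * (g / of_real (cmod g)) = w \<longleftrightarrow> c * of_real (cmod g) = w * cnj g"
proof -
  define n where "n = cmod g"
  have "n \<noteq> 0" and gg: "g * cnj g = of_real n * of_real n"
    using assms by (simp_all add: n_def flip: of_real_mult complex_norm_square power2_eq_square)
  have "c * (g / of_real n) = w \<longleftrightarrow> c * g = w * of_real n"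
    using \<open>n \<noteq> 0\<close> by (auto simp: field_simps)
  also have "\<dots> \<longleftrightarrow> c * g * cnj g = w * of_real n * cnj g"
    using assms by simp
  also have "\<dots> \<longleftrightarrow> (c * of_real n) * of_real n = (w * cnj g) * of_real n"
    by (simp add: gg mult_ac)
  also have "\<dots> \<longleftrightarrow> c * of_real n = w * cnj g"
    using \<open>n \<noteq> 0\<close> by simp
  finally show ?thesis
    by (simp add: n_def)
qed

lemma has_vector_derivative_cis:
  assumes "(\<theta> has_real_derivative \<theta>') (at x within S)"
  shows "((\<lambda>x. cis (\<theta> x)) has_vector_derivative \<i> * of_real \<theta>' * cis (\<theta> x)) (at x within S)"
  using has_derivative_cis[OF assms[unfolded has_field_derivative_def]]
  by (simp add: has_vector_derivative_def scaleR_conv_of_real mult_ac)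

lemma cis_lift_derivative:
  fixes v :: "real \<Rightarrow> complex"
  assumes "open S" and "x \<in> S"
    and lift: "\<And>y. y \<in> S \<Longrightarrow> cis (\<theta> y) * of_real (cmod (v y)) = v y"
    and \<theta>: "(\<theta> has_real_derivative \<theta>') (at x)"
    and v: "(v has_vector_derivative v') (at x)" and "v x \<noteq> 0"
  shows "\<theta>' = Im (cnj (v x) * v') / (cmod (v x))\<^sup>2"
proof -
  define n where "n = cmod (v x)"
  define p where "p = Re (cnj (v x) * v')"
  have "n \<noteq> 0"
    using \<open>v x \<noteq> 0\<close> by (simp add: n_def)
  have "((\<lambda>y. cis (\<theta> y) * of_real (cmod (v y))) has_vector_derivative
      \<i> * of_real \<theta>' * cis (\<theta> x) * of_real n + cis (\<theta> x) * of_real (p / n)) (at x)"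
    unfolding n_def p_def
    by (rule has_vector_derivative_eq_rhs[OF has_vector_derivative_mult[OF
          has_vector_derivative_cis[OF \<theta>]
          has_vector_derivative_of_real[OF has_field_derivative_cmod[OF v \<open>v x \<noteq> 0\<close>]]]])
      (simp add: algebra_simps)
  moreover have "((\<lambda>y. cis (\<theta> y) * of_real (cmod (v y))) has_vector_derivative v') (at x)"
    using v by (rule has_vector_derivative_transform_within_open[OF _ \<open>open S\<close> \<open>x \<in> S\<close>])
      (simp add: lift)
  ultimately have v': "v' = \<i> * of_real \<theta>' * cis (\<theta> x) * of_real n + cis (\<theta> x) * of_real (p / n)"
    using vector_derivative_unique_at by blast
  have "cnj (v x) = cnj (cis (\<theta> x)) * of_real n"
    using lift[OF \<open>x \<in> S\<close>] unfolding n_def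
    by (metis complex_cnj_complex_of_real complex_cnj_mult)
  then have "cnj (v x) * v' =
      (cnj (cis (\<theta> x)) * cis (\<theta> x)) * (\<i> * of_real (\<theta>' * n\<^sup>2) + of_real (n * (p / n)))"
    by (simp add: v' algebra_simps power2_eq_square)
  also have "\<dots> = \<i> * of_real (\<theta>' * n\<^sup>2) + of_real p"
    using \<open>n \<noteq> 0\<close> by (simp add: cis_cnj cis_mult)
  finally show ?thesis
    using \<open>n \<noteq> 0\<close> by (simp add: n_def)
qed

lemma rotated_normalized_has_derivative_zero:
  fixes v :: "real \<Rightarrow> complex"
  assumes v: "(v has_vector_derivative v') (at x within S)" and "v x \<noteq> 0"
    and \<theta>: "(\<theta> has_real_derivative Im (cnj (v x) * v') / (cmod (v x))\<^sup>2) (at x within S)"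
  shows "((\<lambda>x. cis (- \<theta> x) * v x * of_real (inverse (cmod (v x)))) has_vector_derivative 0)
    (at x within S)"
proof -
  define n p h where "n = cmod (v x)" and "p = Re (cnj (v x) * v')" and "h = Im (cnj (v x) * v')"
  have "n \<noteq> 0"
    using \<open>v x \<noteq> 0\<close> by (simp add: n_def)
  have d: "((\<lambda>x. cis (- \<theta> x) * v x * of_real (inverse (cmod (v x)))) has_vector_derivative
      cis (- \<theta> x) * v x * of_real (- (inverse n * (p / n) * inverse n))
      + (cis (- \<theta> x) * v' + \<i> * of_real (- (h / n\<^sup>2)) * cis (- \<theta> x) * v x) * of_real (inverse n))
      (at x within S)"
    unfolding n_def p_def h_def
    by (intro has_vector_derivative_mult has_vector_derivative_cis DERIV_minus \<theta> v
        has_vector_derivative_of_real DERIV_inverse' has_field_derivative_cmod \<open>v x \<noteq> 0\<close>)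
      (simp add: \<open>v x \<noteq> 0\<close>)
  have "of_real p + \<i> * of_real h = cnj (v x) * v'"
    by (simp add: p_def h_def complex_eq_iff)
  then have key: "of_real (n\<^sup>2) * v' = v x * (of_real p + \<i> * of_real h)"
    by (simp add: n_def mult.assoc flip: complex_norm_square)
  have "cis (- \<theta> x) * v x * of_real (- (inverse n * (p / n) * inverse n))
      + (cis (- \<theta> x) * v' + \<i> * of_real (- (h / n\<^sup>2)) * cis (- \<theta> x) * v x) * of_real (inverse n)
    = cis (- \<theta> x) * (of_real (n\<^sup>2) * v' - v x * (of_real p + \<i> * of_real h)) / of_real (n ^ 3)"
    using \<open>n \<noteq> 0\<close> by (simp add: field_simps power2_eq_square power3_eq_cube)
  also have "\<dots> = 0"
    using key by simp
  finally show ?thesis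
    using d by simp
qed

lemma exists_cis_lift:
  fixes v :: "real \<Rightarrow> complex"
  assumes "convex S"
    and v: "\<And>x. x \<in> S \<Longrightarrow> (v has_vector_derivative v' x) (at x within S)"
    and nz: "\<And>x. x \<in> S \<Longrightarrow> v x \<noteq> 0"
    and \<theta>: "\<And>x. x \<in> S \<Longrightarrow>
      (\<theta> has_real_derivative Im (cnj (v x) * v' x) / (cmod (v x))\<^sup>2) (at x within S)"
  obtains \<alpha> where "\<And>x. x \<in> S \<Longrightarrow> cis (\<theta> x + \<alpha>) * of_real (cmod (v x)) = v x"
proof -
  define \<Psi> where "\<Psi> x = cis (- \<theta> x) * v x * of_real (inverse (cmod (v x)))" for x
  obtain C where C: "\<And>x. x \<in> S \<Longrightarrow> \<Psi> x = C"
    using has_vector_derivative_zero_constant[OF \<open>convex S\<close>, of \<Psi>]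
      rotated_normalized_has_derivative_zero[OF v nz \<theta>] unfolding \<Psi>_def by metis
  show thesis
  proof (cases "S = {}")
    case False
    then obtain x0 where "x0 \<in> S"
      by blast
    have "cmod C = 1"
      using C[OF \<open>x0 \<in> S\<close>] nz[OF \<open>x0 \<in> S\<close>] by (auto simp: \<Psi>_def norm_mult norm_inverse)
    then have "C \<noteq> 0"
      by auto
    then have cis_Arg_C: "cis (Arg C) = C"
      using \<open>cmod C = 1\<close> by (simp add: cis_Arg sgn_div_norm)
    show thesis
    proof (rule that[of "Arg C"])
      fix x assume "x \<in> S"
      have "v x = cis (\<theta> x) * \<Psi> x * of_real (cmod (v x))"
        using nz[OF \<open>x \<in> S\<close>] by (simp add: \<Psi>_def cis_mult)
      then show "cis (\<theta> x + Arg C) * of_real (cmod (v x)) = v x"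
        by (simp add: C[OF \<open>x \<in> S\<close>] cis_Arg_C cis_mult[symmetric])
    qed
  qed (use that in blast)
qed

lemma continuous_nonvanishing_same_sign:
  fixes f :: "real \<Rightarrow> real"
  assumes "connected S" and "continuous_on S f" and nz: "\<And>x. x \<in> S \<Longrightarrow> f x \<noteq> 0"
    and "s \<in> S" and "t \<in> S"
  shows "f s * f t > 0"
proof (rule ccontr)
  assume "\<not> f s * f t > 0"
  then have "f s \<le> 0 \<and> 0 \<le> f t \<or> f t \<le> 0 \<and> 0 \<le> f s"
    using mult_pos_pos[of "f s" "f t"] mult_neg_neg[of "f s" "f t"] by linarith
  moreover have "connected (f ` S)"
    using assms(2,1) by (rule connected_continuous_image)
  moreover have "f s \<in> f ` S" and "f t \<in> f ` S"
    using \<open>s \<in> S\<close> \<open>t \<in> S\<close> by simp_all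
  ultimately have "0 \<in> f ` S"
    by (blast intro: connectedD_interval)
  then show False
    using nz by auto
qed

lemma strict_increasing_if_deriv_nonneg_pos_at:
  fixes f :: "real \<Rightarrow> real"
  assumes cont: "continuous_on {a..b} f"
    and f': "\<And>x. a < x \<Longrightarrow> x < b \<Longrightarrow> (f has_real_derivative f' x) (at x)"
    and nonneg: "\<And>x. a < x \<Longrightarrow> x < b \<Longrightarrow> f' x \<ge> 0"
    and "a < t" and "t < b" and "f' t > 0"
  shows "f a < f b"
proof (rule ccontr)
  assume "\<not> f a < f b"
  have increasing: "f x \<le> f y" if "a \<le> x" "x \<le> y" "y \<le> b" for x y
  proof (rule DERIV_nonneg_imp_increasing_open[OF \<open>x \<le> y\<close>])
    fix z assume "x < z" "z < y"
    then show "\<exists>y. DERIV f z :> y \<and> y \<ge> 0"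
      using that f' nonneg by (meson le_less_trans less_le_trans)
  next
    show "continuous_on {x..y} f"
      using that by (intro continuous_on_subset[OF cont]) auto
  qed
  have flat: "f x = f a" if "x \<in> {a<..<b}" for x
    using that increasing[of a x] increasing[of x b] \<open>\<not> f a < f b\<close> by auto
  have "((\<lambda>_. f a) has_real_derivative f' t) (at t)"
    by (rule has_field_derivative_transform_within_open[OF f'[OF \<open>a < t\<close> \<open>t < b\<close>]
          open_greaterThanLessThan[of a b]]) (simp_all add: \<open>a < t\<close> \<open>t < b\<close> flat)
  then have "f' t = 0"
    using DERIV_const DERIV_unique by blast
  then show False
    using \<open>f' t > 0\<close> by simp
qed

lemma zero_less_mult_sign_trans:
  fixes a b c :: real
  assumes "0 < a * b" and "0 < b * c"
  shows "0 < a * c"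
  using assms by (auto simp: zero_less_mult_iff)

lemma strict_mono_on_if_deriv_pos:
  fixes f :: "real \<Rightarrow> real"
  assumes "\<And>x. x \<in> {a<..<b} \<Longrightarrow> (f has_real_derivative f' x) (at x) \<and> f' x > 0"
  shows "strict_mono_on {a<..<b} f"
proof (rule strict_mono_onI)
  fix r s assume "r \<in> {a<..<b}" "s \<in> {a<..<b}" "r < s"
  show "f r < f s"
  proof (rule DERIV_pos_imp_increasing[OF \<open>r < s\<close>])
    fix x assume "r \<le> x" "x \<le> s"
    then have "x \<in> {a<..<b}"
      using \<open>r \<in> {a<..<b}\<close> \<open>s \<in> {a<..<b}\<close> by auto
    then show "\<exists>y. DERIV f x :> y \<and> y > 0"
      using assms by blast
  qed
qed

lemma strict_mono_on_or_neg_if_deriv_sign: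
  fixes f :: "real \<Rightarrow> real"
  assumes f': "\<And>x. x \<in> {a<..<b} \<Longrightarrow> (f has_real_derivative f' x) (at x)"
    and sign: "\<And>x. x \<in> {a<..<b} \<Longrightarrow> c * f' x > 0"
  shows "strict_mono_on {a<..<b} f \<or> strict_mono_on {a<..<b} (\<lambda>x. - f x)"
proof (cases "c > 0")
  case True
  then have "strict_mono_on {a<..<b} f"
    using f' sign by (intro strict_mono_on_if_deriv_pos) (auto simp: zero_less_mult_iff)
  then show ?thesis ..
next
  case False
  then have "strict_mono_on {a<..<b} (\<lambda>x. - f x)"
    using f' sign by (intro strict_mono_on_if_deriv_pos[where f' = "\<lambda>x. - f' x"])
      (auto intro: DERIV_minus simp: zero_less_mult_iff)
  then show ?thesis ..
qed

locale arclength_curve =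
  fixes L :: real and \<gamma> :: "real \<Rightarrow> complex" and D :: "nat \<Rightarrow> real \<Rightarrow> complex"
  assumes L_pos: "L > 0"
    and D_0: "\<And>x. x \<in> {0..L} \<Longrightarrow> D 0 x = \<gamma> x"
    and D_Suc: "\<And>n x. x \<in> {0..L} \<Longrightarrow>
      (D n has_vector_derivative D (Suc n) x) (at x within {0..L})"
    and arclength: "arclength_param L \<gamma>"
begin

abbreviation "\<kappa> \<equiv> curvature L \<gamma>"

lemma D_Suc_at: "x \<in> {0<..<L} \<Longrightarrow> (D n has_vector_derivative D (Suc n) x) (at x)"
  using D_Suc[of x n] at_within_Icc_at[of 0 x L] by auto

lemma continuous_on_D: "continuous_on {0..L} (D n)"
  using D_Suc by (rule continuous_on_vector_derivative)

lemma tangent_eq_D1: "x \<in> {0..L} \<Longrightarrow> tangent L \<gamma> x = D 1 x"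
proof -
  assume x: "x \<in> {0..L}"
  have "(\<gamma> has_vector_derivative D (Suc 0) x) (at x within {0..L})"
    by (rule has_vector_derivative_transform[OF x _ D_Suc[OF x, of 0]]) (simp add: D_0)
  then show ?thesis
    unfolding tangent_def using L_pos x by (simp add: vector_derivative_within_closed_interval)
qed

lemma curvature_eq: "x \<in> {0..L} \<Longrightarrow> \<kappa> x = Im (cnj (D 1 x) * D 2 x)"
proof -
  assume x: "x \<in> {0..L}"
  have "(tangent L \<gamma> has_vector_derivative D (Suc 1) x) (at x within {0..L})"
    by (rule has_vector_derivative_transform[OF x _ D_Suc[OF x, of 1]]) (simp add: tangent_eq_D1)
  then have "vector_derivative (tangent L \<gamma>) (at x within {0..L}) = D 2 x"
    using L_pos x by (simp add: vector_derivative_within_closed_interval numeral_2_eq_2)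
  then show ?thesis
    using x by (simp add: curvature_def tangent_eq_D1)
qed

lemma norm_D1: "x \<in> {0..L} \<Longrightarrow> cmod (D 1 x) = 1"
  using arclength tangent_eq_D1 unfolding arclength_param_def by auto

lemma D1_mult_cnj: "x \<in> {0..L} \<Longrightarrow> D 1 x * cnj (D 1 x) = 1"
  using complex_norm_square[of "D 1 x"] norm_D1 by simp

lemma frenet: "x \<in> {0<..<L} \<Longrightarrow> D 2 x = \<i> * of_real (\<kappa> x) * D 1 x"
proof -
  assume x: "x \<in> {0<..<L}"
  have "((\<lambda>t. D 1 t * cnj (D 1 t)) has_vector_derivative
      D 1 x * cnj (D 2 x) + D 2 x * cnj (D 1 x)) (at x)"
    using D_Suc_at[OF x, of 1] by (auto intro!: derivative_eq_intros simp: numeral_2_eq_2)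
  moreover have "((\<lambda>t. D 1 t * cnj (D 1 t)) has_vector_derivative 0) (at x)"
    by (rule has_vector_derivative_transform_within_open[OF has_vector_derivative_const[of 1]
          open_greaterThanLessThan x]) (simp add: D1_mult_cnj del: One_nat_def)
  ultimately have "D 1 x * cnj (D 2 x) + D 2 x * cnj (D 1 x) = 0"
    using vector_derivative_unique_at by blast
  then have "Re (D 1 x * cnj (D 2 x) + D 2 x * cnj (D 1 x)) = 0"
    by simp
  then have "Re (cnj (D 1 x) * D 2 x) = 0"
    by (simp add: algebra_simps)
  then have tangential: "cnj (D 1 x) * D 2 x = \<i> * of_real (\<kappa> x)"
    using curvature_eq x by (simp add: complex_eq_iff)
  have "D 2 x = (D 1 x * cnj (D 1 x)) * D 2 x"
    using D1_mult_cnj[of x] x by simp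
  also have "\<dots> = D 1 x * (cnj (D 1 x) * D 2 x)"
    by (simp only: mult.assoc)
  finally show ?thesis
    by (simp only: tangential mult_ac)
qed

lemma curvature_has_derivative: "x \<in> {0<..<L} \<Longrightarrow> (\<kappa> has_real_derivative deriv \<kappa> x) (at x)"
proof -
  assume x: "x \<in> {0<..<L}"
  have "((\<lambda>t. Im (cnj (D 1 t) * D 2 t)) has_real_derivative
      Im (cnj (D 1 x) * D 3 x + cnj (D 2 x) * D 2 x)) (at x)"
    using D_Suc_at[OF x, of 1] D_Suc_at[OF x, of 2]
    by (intro has_field_derivative_Im has_vector_derivative_mult has_vector_derivative_cnj)
      (simp_all add: numeral_3_eq_3 numeral_2_eq_2)
  then have "(\<kappa> has_real_derivative Im (cnj (D 1 x) * D 3 x + cnj (D 2 x) * D 2 x)) (at x)"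
    by (rule has_field_derivative_transform_within_open[OF _ open_greaterThanLessThan x])
      (simp add: curvature_eq)
  moreover from this have "deriv \<kappa> x = Im (cnj (D 1 x) * D 3 x + cnj (D 2 x) * D 2 x)"
    by (rule DERIV_imp_deriv)
  ultimately show ?thesis
    by simp
qed

lemma continuous_on_curvature: "continuous_on {0..L} \<kappa>"
proof -
  have "continuous_on {0..L} (\<lambda>x. Im (cnj (D 1 x) * D 2 x))"
    by (intro continuous_intros continuous_on_D)
  then show ?thesis
    by (rule continuous_on_eq) (simp add: curvature_eq)
qed


definition W :: "real \<Rightarrow> complex" where
  "W s = D 1 s * cnj (D 0 s)"

lemma continuous_on_W: "continuous_on {0..L} W"
  unfolding W_def by (intro continuous_intros continuous_on_D)

lemma norm_W: "x \<in> {0..L} \<Longrightarrow> cmod (W x) = cmod (\<gamma> x)"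
  by (simp add: W_def norm_mult norm_D1 D_0 del: One_nat_def)

lemma W_has_derivative:
  "x \<in> {0<..<L} \<Longrightarrow> (W has_vector_derivative \<i> * of_real (\<kappa> x) * W x + 1) (at x)"
proof -
  assume x: "x \<in> {0<..<L}"
  have "(W has_vector_derivative D 1 x * cnj (D 1 x) + D 2 x * cnj (D 0 x)) (at x)"
    unfolding W_def using D_Suc_at[OF x, of 0] D_Suc_at[OF x, of 1]
    by (auto intro!: derivative_eq_intros simp: numeral_2_eq_2)
  then show ?thesis
    using x D1_mult_cnj frenet by (simp add: W_def algebra_simps)
qed

definition polar_angle_rate :: "real \<Rightarrow> real" where
  "polar_angle_rate s = \<kappa> s + Im (cnj (W s)) / (cmod (W s))\<^sup>2"

lemma polar_angle_rate_eq:
  assumes "s \<in> {0<..<L}" and "\<gamma> s \<noteq> 0"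
  shows "Im (cnj (W s) * (\<i> * of_real (\<kappa> s) * W s + 1)) / (cmod (W s))\<^sup>2 = polar_angle_rate s"
proof -
  have "cnj (W s) * (\<i> * of_real (\<kappa> s) * W s + 1)
      = \<i> * of_real (\<kappa> s) * (W s * cnj (W s)) + cnj (W s)"
    by (simp add: algebra_simps)
  also have "\<dots> = \<i> * of_real (\<kappa> s) * of_real ((cmod (W s))\<^sup>2) + cnj (W s)"
    by (simp only: complex_norm_square)
  finally have "Im (cnj (W s) * (\<i> * of_real (\<kappa> s) * W s + 1))
      = \<kappa> s * (cmod (W s))\<^sup>2 + Im (cnj (W s))"
    by simp
  moreover have "cmod (W s) \<noteq> 0"
    using assms norm_W[of s] by simp
  ultimately show ?thesis
    by (simp add: polar_angle_rate_def field_simps)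
qed

lemma polar_angle_iff:
  assumes "s \<in> {0<..<L}" and "\<gamma> s \<noteq> 0"
  shows "rot \<omega> (\<gamma> s / of_real (cmod (\<gamma> s))) = tangent L \<gamma> s
    \<longleftrightarrow> cis \<omega> * of_real (cmod (W s)) = W s"
  using mult_normalized_eq_iff[OF assms(2)] assms norm_W[of s] D_0[of s] tangent_eq_D1[of s]
  by (simp add: rot_def W_def)


lemma polar_tangential_angle_nonzero:
  assumes "polar_tangential_angle L \<gamma> \<omega>" and "s \<in> {0<..<L}"
  shows "\<gamma> s \<noteq> 0"
proof
  assume "\<gamma> s = 0"
  moreover have "rot (\<omega> s) (\<gamma> s / of_real (cmod (\<gamma> s))) = tangent L \<gamma> s"
    using assms unfolding polar_tangential_angle_def by blast
  ultimately have "tangent L \<gamma> s = 0"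
    by (simp add: rot_def)
  then show False
    using assms(2) norm_D1[of s] tangent_eq_D1[of s] by simp
qed

lemma polar_tangential_angle_has_derivative:
  assumes \<omega>: "polar_tangential_angle L \<gamma> \<omega>" and s: "s \<in> {0<..<L}"
  shows "(\<omega> has_real_derivative polar_angle_rate s) (at s)"
proof -
  obtain E where E0: "\<And>x. x \<in> {0<..<L} \<Longrightarrow> E 0 x = \<omega> x"
    and E: "\<And>n x. x \<in> {0<..<L} \<Longrightarrow> (E n has_vector_derivative E (Suc n) x) (at x within {0<..<L})"
    using \<omega> unfolding polar_tangential_angle_def smooth_on_def by blast
  have "(E 0 has_real_derivative E 1 s) (at s)"
    using E[OF s, of 0] at_within_open[OF s]
    by (simp add: has_real_derivative_iff_has_vector_derivative)
  then have "(\<omega> has_real_derivative E 1 s) (at s)"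
    by (rule has_field_derivative_transform_within_open[OF _ open_greaterThanLessThan s])
      (simp add: E0)
  moreover have "E 1 s = polar_angle_rate s"
  proof -
    have "E 1 s = Im (cnj (W s) * (\<i> * of_real (\<kappa> s) * W s + 1)) / (cmod (W s))\<^sup>2"
    proof (rule cis_lift_derivative[OF _ s])
      fix y assume "y \<in> {0<..<L}"
      then show "cis (\<omega> y) * of_real (cmod (W y)) = W y"
        using \<omega> polar_angle_iff polar_tangential_angle_nonzero[OF \<omega>]
        unfolding polar_tangential_angle_def by blast
    qed (use s W_has_derivative \<open>(\<omega> has_real_derivative E 1 s) (at s)\<close>
        polar_tangential_angle_nonzero[OF \<omega> s] norm_W[of s] in auto)
    then show ?thesis
      using polar_angle_rate_eq[OF s polar_tangential_angle_nonzero[OF \<omega> s]] by simp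
  qed
  ultimately show ?thesis
    by simp
qed

definition curve_generators :: "(real \<Rightarrow> real) set" where
  "curve_generators = range (\<lambda>n x. Re (D n x)) \<union> range (\<lambda>n x. Im (D n x))
     \<union> {\<lambda>x. inverse ((Re (D 0 x))\<^sup>2 + (Im (D 0 x))\<^sup>2)}"

lemma Re_D_mem: "(\<lambda>x. Re (D n x)) \<in> generated_algebra curve_generators"
  by (rule generated_algebra.generator) (simp add: curve_generators_def)

lemma Im_D_mem: "(\<lambda>x. Im (D n x)) \<in> generated_algebra curve_generators"
  by (rule generated_algebra.generator) (simp add: curve_generators_def)

lemma inverse_norm_D0_mem:
  "(\<lambda>x. inverse ((Re (D 0 x))\<^sup>2 + (Im (D 0 x))\<^sup>2)) \<in> generated_algebra curve_generators"
  by (rule generated_algebra.generator) (simp add: curve_generators_def)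

lemma inverse_norm_D0_has_derivative:
  assumes x: "x \<in> {0<..<L}" and "\<gamma> x \<noteq> 0"
  defines "q \<equiv> \<lambda>x. inverse ((Re (D 0 x))\<^sup>2 + (Im (D 0 x))\<^sup>2)"
  shows "(q has_real_derivative
    (- 2) * ((Re (D 0 x) * Re (D 1 x) + Im (D 0 x) * Im (D 1 x)) * (q x * q x))) (at x)"
proof -
  have nonzero: "(Re (D 0 x))\<^sup>2 + (Im (D 0 x))\<^sup>2 \<noteq> 0"
    using assms D_0[of x] by (simp add: complex_eq_iff)
  have "((\<lambda>x. (Re (D 0 x))\<^sup>2 + (Im (D 0 x))\<^sup>2) has_real_derivative
      2 * Re (D 0 x) * Re (D 1 x) + 2 * Im (D 0 x) * Im (D 1 x)) (at x)"
    using D_Suc_at[OF x, of 0] by (auto intro!: derivative_eq_intros)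
  from DERIV_inverse'[OF this nonzero] show ?thesis
    unfolding q_def by (rule DERIV_cong) (simp add: algebra_simps)
qed

lemma curve_generators_derivative:
  assumes nz: "\<And>s. s \<in> {0<..<L} \<Longrightarrow> \<gamma> s \<noteq> 0" and "g \<in> curve_generators"
  shows "\<exists>g'\<in>generated_algebra curve_generators.
    \<forall>x\<in>{0<..<L}. (g has_real_derivative g' x) (at x within {0<..<L})"
proof -
  have Re_D: "((\<lambda>x. Re (D n x)) has_real_derivative Re (D (Suc n) x)) (at x)"
    and Im_D: "((\<lambda>x. Im (D n x)) has_real_derivative Im (D (Suc n) x)) (at x)"
    if "x \<in> {0<..<L}" for n x
    using has_field_derivative_Re[OF D_Suc_at[OF that]] has_field_derivative_Im[OF D_Suc_at[OF that]]
    by simp_all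
  let ?q = "\<lambda>x. inverse ((Re (D 0 x))\<^sup>2 + (Im (D 0 x))\<^sup>2)"
  let ?q' = "\<lambda>x. (- 2) * ((Re (D 0 x) * Re (D 1 x) + Im (D 0 x) * Im (D 1 x)) * (?q x * ?q x))"
  consider n where "g = (\<lambda>x. Re (D n x))" | n where "g = (\<lambda>x. Im (D n x))" | "g = ?q"
    using \<open>g \<in> curve_generators\<close> unfolding curve_generators_def by blast
  then show ?thesis
  proof cases
    case 1
    then have "\<forall>x\<in>{0<..<L}. (g has_real_derivative Re (D (Suc n) x)) (at x within {0<..<L})"
      using Re_D by (simp add: has_field_derivative_at_within)
    then show ?thesis
      using Re_D_mem[of "Suc n"] by (intro bexI[where x = "\<lambda>x. Re (D (Suc n) x)"]) simp_all
  next
    case 2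
    then have "\<forall>x\<in>{0<..<L}. (g has_real_derivative Im (D (Suc n) x)) (at x within {0<..<L})"
      using Im_D by (simp add: has_field_derivative_at_within)
    then show ?thesis
      using Im_D_mem[of "Suc n"] by (intro bexI[where x = "\<lambda>x. Im (D (Suc n) x)"]) simp_all
  next
    case 3
    have "?q' \<in> generated_algebra curve_generators"
      by (intro generated_algebra.const generated_algebra.add generated_algebra.diff
          generated_algebra.mult Re_D_mem Im_D_mem inverse_norm_D0_mem)
    moreover have "\<forall>x\<in>{0<..<L}. (g has_real_derivative ?q' x) (at x within {0<..<L})"
      using 3 inverse_norm_D0_has_derivative nz by (simp add: has_field_derivative_at_within)
    ultimately show ?thesis
      by (intro bexI[where x = ?q'])
  qed
qed

lemma smooth_on_polar_angle_rate:
  assumes nz: "\<And>s. s \<in> {0<..<L} \<Longrightarrow> \<gamma> s \<noteq> 0"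
  shows "smooth_on {0<..<L} polar_angle_rate"
proof -
  let ?rate = "\<lambda>x. (Re (D 1 x) * Im (D 2 x) - Im (D 1 x) * Re (D 2 x))
      + (Re (D 1 x) * Im (D 0 x) - Im (D 1 x) * Re (D 0 x))
        * inverse ((Re (D 0 x))\<^sup>2 + (Im (D 0 x))\<^sup>2)"
  have "?rate \<in> generated_algebra curve_generators"
    by (intro generated_algebra.add generated_algebra.diff generated_algebra.mult
        Re_D_mem Im_D_mem inverse_norm_D0_mem)
  with curve_generators_derivative[OF nz] have "smooth_on {0<..<L} ?rate"
    by (rule smooth_on_generated_algebra)
  then show ?thesis
  proof (rule smooth_on_cong)
    fix x assume x: "x \<in> {0<..<L}"
    have "(cmod (W x))\<^sup>2 = (Re (D 0 x))\<^sup>2 + (Im (D 0 x))\<^sup>2"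
      using norm_W[of x] D_0[of x] x by (simp add: cmod_power2)
    then show "?rate x = polar_angle_rate x"
      using x curvature_eq[of x] by (simp add: polar_angle_rate_def W_def divide_inverse)
  qed
qed

lemma exists_polar_tangential_angle:
  assumes nz: "\<And>s. s \<in> {0<..<L} \<Longrightarrow> \<gamma> s \<noteq> 0"
  shows "\<exists>\<omega>. polar_tangential_angle L \<gamma> \<omega>"
proof -
  have "continuous_on {0<..<L} polar_angle_rate"
    unfolding polar_angle_rate_def using nz norm_W
    by (intro continuous_intros continuous_on_subset[OF continuous_on_W]
        continuous_on_subset[OF continuous_on_curvature]) auto
  then obtain \<theta> where \<theta>: "\<And>x. x \<in> {0<..<L} \<Longrightarrow> (\<theta> has_real_derivative polar_angle_rate x) (at x)"
    using einterval_antiderivative[of 0 "ereal L" polar_angle_rate] L_pos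
    by (auto simp: continuous_on_eq_continuous_at has_real_derivative_iff_has_vector_derivative)
  obtain \<alpha> where \<alpha>: "\<And>x. x \<in> {0<..<L} \<Longrightarrow> cis (\<theta> x + \<alpha>) * of_real (cmod (W x)) = W x"
  proof (rule exists_cis_lift[of "{0<..<L}" W "\<lambda>x. \<i> * of_real (\<kappa> x) * W x + 1" \<theta>])
    fix x assume x: "x \<in> {0<..<L}"
    show "(W has_vector_derivative \<i> * of_real (\<kappa> x) * W x + 1) (at x within {0<..<L})"
      using W_has_derivative[OF x] by (rule has_vector_derivative_at_within)
    show "W x \<noteq> 0"
      using nz[OF x] norm_W[of x] x by auto
    show "(\<theta> has_real_derivative
        Im (cnj (W x) * (\<i> * of_real (\<kappa> x) * W x + 1)) / (cmod (W x))\<^sup>2) (at x within {0<..<L})"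
      using \<theta>[OF x] polar_angle_rate_eq[OF x nz[OF x]] by (simp add: has_field_derivative_at_within)
  qed (use that in auto)
  have "polar_tangential_angle L \<gamma> (\<lambda>x. \<theta> x + \<alpha>)"
    unfolding polar_tangential_angle_def
  proof (intro conjI ballI)
    show "smooth_on {0<..<L} (\<lambda>x. \<theta> x + \<alpha>)"
    proof (rule smooth_on_if_derivative_smooth[OF _ smooth_on_polar_angle_rate[OF nz]])
      fix x assume "x \<in> {0<..<L}"
      have "((\<lambda>x. \<theta> x + \<alpha>) has_real_derivative polar_angle_rate x) (at x)"
        using DERIV_add[OF \<theta>[OF \<open>x \<in> {0<..<L}\<close>] DERIV_const[of \<alpha>]] by simp
      then show "((\<lambda>x. \<theta> x + \<alpha>) has_vector_derivative polar_angle_rate x) (at x within {0<..<L})"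
        by (simp add: has_real_derivative_iff_has_vector_derivative has_vector_derivative_at_within)
    qed
  next
    fix s assume "s \<in> {0<..<L}"
    then show "rot (\<theta> s + \<alpha>) (\<gamma> s / of_real (cmod (\<gamma> s))) = tangent L \<gamma> s"
      using polar_angle_iff nz \<alpha> by blast
  qed
  then show ?thesis
    by blast
qed


definition Q :: "real \<Rightarrow> real" where
  "Q s = \<kappa> s * (cmod (W s))\<^sup>2 + 2 * Im (cnj (W s))"

lemma continuous_on_Q: "continuous_on {0..L} Q"
  unfolding Q_def by (intro continuous_intros continuous_on_W continuous_on_curvature)

lemma Q_has_derivative:
  assumes x: "x \<in> {0<..<L}"
  shows "(Q has_real_derivative deriv \<kappa> x * (cmod (W x))\<^sup>2) (at x)"
proof -
  have Q_eq: "Q = (\<lambda>s. \<kappa> s * Re (W s * cnj (W s)) + 2 * Im (cnj (W s)))"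
    by (simp add: Q_def fun_eq_iff flip: complex_norm_square)
  let ?W' = "\<i> * of_real (\<kappa> x) * W x + 1"
  have "(Q has_real_derivative
      deriv \<kappa> x * Re (W x * cnj (W x)) + \<kappa> x * Re (W x * cnj ?W' + ?W' * cnj (W x))
      + 2 * Im (cnj ?W')) (at x)"
    unfolding Q_eq using curvature_has_derivative[OF x] W_has_derivative[OF x]
    by (auto intro!: derivative_eq_intros has_field_derivative_Re has_field_derivative_Im
        has_vector_derivative_mult has_vector_derivative_cnj)
  moreover have "deriv \<kappa> x * Re (W x * cnj (W x)) + \<kappa> x * Re (W x * cnj ?W' + ?W' * cnj (W x))
      + 2 * Im (cnj ?W') = deriv \<kappa> x * (cmod (W x))\<^sup>2"
    by (simp add: algebra_simps flip: complex_norm_square)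
  ultimately show ?thesis
    by simp
qed

lemma exists_nonzero_near_start:
  assumes "s \<in> {0<..<L}"
  shows "\<exists>t\<in>{0<..<s}. \<gamma> t \<noteq> 0"
proof (rule ccontr)
  assume "\<not> ?thesis"
  then have "D 0 t = 0" if "t \<in> {0<..<s}" for t
    using that assms D_0[of t] by auto
  moreover have "s / 2 \<in> {0<..<s}"
    using assms by simp
  ultimately have "(D 0 has_vector_derivative 0) (at (s / 2))"
    by (intro has_vector_derivative_transform_within_open[OF has_vector_derivative_const[of 0]
          open_greaterThanLessThan[of 0 s]]) auto
  then have "D 1 (s / 2) = 0"
    using D_Suc_at[of "s / 2" 0] assms vector_derivative_unique_at by auto
  then show False
    using norm_D1[of "s / 2"] assms by auto
qed

end

locale monotone_curvature_curve = arclength_curve +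
  assumes start_origin: "\<gamma> 0 = 0"
    and curvature_mult_deriv_pos: "\<forall>s\<in>{0<..<L}. \<kappa> s * deriv \<kappa> s > 0"
begin

lemma curvature_same_sign:
  assumes "s \<in> {0<..<L}" and "t \<in> {0<..<L}"
  shows "\<kappa> s * \<kappa> t > 0"
proof (rule continuous_nonvanishing_same_sign[OF _ _ _ assms])
  show "continuous_on {0<..<L} \<kappa>"
    by (rule continuous_on_subset[OF continuous_on_curvature]) auto
  show "\<kappa> x \<noteq> 0" if "x \<in> {0<..<L}" for x
    using curvature_mult_deriv_pos that by force
qed simp

lemma curvature_mult_Q_pos:
  assumes s: "s \<in> {0<..<L}"
  shows "\<kappa> s * Q s > 0"
proof -
  obtain t where t: "t \<in> {0<..<s}" "\<gamma> t \<noteq> 0"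
    using exists_nonzero_near_start[OF s] by blast
  have pos: "\<kappa> s * deriv \<kappa> x > 0" if "x \<in> {0<..<L}" for x
    using curvature_same_sign[OF s that] curvature_mult_deriv_pos that
    by (blast intro: zero_less_mult_sign_trans)
  have "\<kappa> s * Q 0 < \<kappa> s * Q s"
  proof (rule strict_increasing_if_deriv_nonneg_pos_at[where f = "\<lambda>x. \<kappa> s * Q x"
        and a = 0 and b = s and t = t and f' = "\<lambda>x. \<kappa> s * deriv \<kappa> x * (cmod (W x))\<^sup>2"])
    have "continuous_on {0..s} Q"
      using s by (intro continuous_on_subset[OF continuous_on_Q]) auto
    then show "continuous_on {0..s} (\<lambda>x. \<kappa> s * Q x)"
      by (intro continuous_intros)
    show "0 < t" and "t < s"
      using t by auto
    have "t \<in> {0<..<L}" and "(cmod (W t))\<^sup>2 > 0"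
      using s t norm_W[of t] by auto
    then show "\<kappa> s * deriv \<kappa> t * (cmod (W t))\<^sup>2 > 0"
      using pos by simp
  next
    fix x assume "0 < x" "x < s"
    then have x: "x \<in> {0<..<L}"
      using s by auto
    show "((\<lambda>x. \<kappa> s * Q x) has_real_derivative \<kappa> s * deriv \<kappa> x * (cmod (W x))\<^sup>2) (at x)"
      using DERIV_cmult[OF Q_has_derivative[OF x], of "\<kappa> s"] by (simp add: mult.assoc)
    show "\<kappa> s * deriv \<kappa> x * (cmod (W x))\<^sup>2 \<ge> 0"
      using pos[OF x] by simp
  qed
  moreover have "Q 0 = 0"
    using start_origin D_0[of 0] L_pos by (simp add: Q_def W_def)
  ultimately show ?thesis
    by simp
qed

lemma curve_nonzero:
  assumes "s \<in> {0<..<L}"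
  shows "\<gamma> s \<noteq> 0"
proof
  assume "\<gamma> s = 0"
  then have "Q s = 0"
    using assms D_0[of s] by (simp add: Q_def W_def)
  then show False
    using curvature_mult_Q_pos[OF assms] by simp
qed

lemma curvature_mult_polar_angle_rate_pos:
  assumes "s \<in> {0<..<L}"
  shows "\<kappa> s * polar_angle_rate s > 0"
proof -
  have "(cmod (W s))\<^sup>2 > 0"
    using curve_nonzero[OF assms] norm_W[of s] assms by simp
  then have "2 * (\<kappa> s * polar_angle_rate s) * (cmod (W s))\<^sup>2
      = (\<kappa> s)\<^sup>2 * (cmod (W s))\<^sup>2 + \<kappa> s * Q s"
    by (simp add: polar_angle_rate_def Q_def field_simps power2_eq_square)
  also have "\<dots> > 0"
    using curvature_mult_Q_pos[OF assms] by (simp add: add_nonneg_pos)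
  finally show ?thesis
    using \<open>(cmod (W s))\<^sup>2 > 0\<close> by (simp add: zero_less_mult_iff)
qed

lemma curvature_mult_deriv_polar_angle_pos:
  assumes "polar_tangential_angle L \<gamma> \<omega>" and "s \<in> {0<..<L}"
  shows "\<kappa> s * deriv \<omega> s > 0"
  using curvature_mult_polar_angle_rate_pos[OF assms(2)]
    DERIV_imp_deriv[OF polar_tangential_angle_has_derivative[OF assms]] by simp

lemma polar_tangential_angle_strict_mono:
  assumes \<omega>: "polar_tangential_angle L \<gamma> \<omega>"
  shows "strict_mono_on {0<..<L} \<omega> \<or> strict_mono_on {0<..<L} (\<lambda>s. - \<omega> s)"
proof (rule strict_mono_on_or_neg_if_deriv_sign[where c = "\<kappa> (L / 2)"])
  fix s assume s: "s \<in> {0<..<L}"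
  show "(\<omega> has_real_derivative polar_angle_rate s) (at s)"
    using \<omega> s by (rule polar_tangential_angle_has_derivative)
  have "L / 2 \<in> {0<..<L}"
    using L_pos by simp
  with s show "\<kappa> (L / 2) * polar_angle_rate s > 0"
    using curvature_same_sign curvature_mult_polar_angle_rate_pos
    by (blast intro: zero_less_mult_sign_trans)
qed

end

theorem corollary2p7:
  fixes L :: real and \<gamma> :: "real \<Rightarrow> complex"
  assumes "L > 0"
    and "smooth_on {0..L} \<gamma>"
    and "arclength_param L \<gamma>"
    and "\<gamma> 0 = 0"
    and "\<forall>s\<in>{0<..<L}. curvature L \<gamma> s * deriv (curvature L \<gamma>) s > 0"
  shows "(\<forall>s\<in>{0<..<L}. \<gamma> s \<noteq> 0)
       \<and> (\<exists>\<omega>. polar_tangential_angle L \<gamma> \<omega>)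
       \<and> (\<forall>\<omega>. polar_tangential_angle L \<gamma> \<omega> \<longrightarrow>
            (\<forall>s\<in>{0<..<L}. curvature L \<gamma> s * deriv \<omega> s > 0)
            \<and> (strict_mono_on {0<..<L} \<omega> \<or> strict_mono_on {0<..<L} (\<lambda>s. - \<omega> s)))"
proof -
  obtain D where "\<forall>x\<in>{0..L}. D 0 x = \<gamma> x"
    and "\<forall>n. \<forall>x\<in>{0..L}. (D n has_vector_derivative D (Suc n) x) (at x within {0..L})"
    using assms(2) unfolding smooth_on_def by blast
  then interpret monotone_curvature_curve L \<gamma> D
    using assms by unfold_locales auto
  show ?thesis
    using curve_nonzero exists_polar_tangential_angle curvature_mult_deriv_polar_angle_pos
      polar_tangential_angle_strict_mono by blast
qed

end
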